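(* Let $a$ and $i$ be positive integers. Then $$\binom{3a+i}{a+i}-\binom{3a+2i}{a}=\sum_{k\geq1}\left\{\frac{i+3k}{i+k}\binom{i+k}{2k}-\binom{i}{k}\right\}\binom{3a+i}{a-k}.$$
   Context: Here $\binom{n}{m}$ denotes the ordinary binomial coefficient, with $\binom{n}{m}=0$ when $m<0$ or $m>n$ (so the sum is finite). *)

theory Defs
  imports Complex_Main
begin

end

theory Submission
  imports Defs
begin

(* Put w(i,0) = 1 and w(i,k) = C(i+k,2k) + C(i+k-1,2k-1) = (i+3k)/(i+k) C(i+k,2k) for k >= 1.
   The core is the identity  sum_{k<=a} w(i,k) C(3a+i,a-k) = C(3a+i,2a)  for a >= 1, proved by
   induction on i: passing from i to i+1 multiplies the right side by (3a+i+1)/(a+i+1), and the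
   left side obeys the same recurrence because the termwise defect telescopes, with
   Wilf-Zeilberger certificate C(i+k-1,2k-2) C(3a+i,a-k).  Subtracting Vandermonde's
   convolution  sum_k C(i,k) C(3a+i,a-k) = C(3a+2i,a)  gives the theorem. *)

lemma of_nat_Suc_times_binomial_Suc:
  "real (Suc j) * real (n choose Suc j) = (real n - real j) * real (n choose j)"
  using gbinomial_mult_1[of "real n" j] by (simp add: binomial_gbinomial algebra_simps)

lemma binomial_Suc_left:
  "Suc n choose m = (n choose m) + (if m = 0 then 0 else n choose (m - 1))"
  by (cases m) simp_all

lemma of_nat_times_binomial_pred:
  "real m * real (n choose m) =
     (if m = 0 then 0 else (real n + 1 - real m) * real (n choose (m - 1)))"
  by (cases m) (use of_nat_Suc_times_binomial_Suc in fastforce)+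

fun binom_weight :: "nat \<Rightarrow> nat \<Rightarrow> nat" where
  "binom_weight i 0 = 1"
| "binom_weight i (Suc k) = ((i + Suc k) choose (2 * Suc k)) + ((i + k) choose Suc (2 * k))"

lemma binom_weight_eq_ratio:
  assumes "k \<ge> 1"
  shows "real (binom_weight i k) = real (i + 3*k) / real (i + k) * real ((i + k) choose (2*k))"
proof -
  obtain j where k: "k = Suc j" using assms by (cases k) auto
  have "(2*k) * ((i + k) choose (2*k)) = (i + k) * ((i + j) choose Suc (2*j))"
    using Suc_times_binomial[of "Suc (2*j)" "i + j"] by (simp add: k del: binomial_Suc_Suc)
  then have "real (2*k) * real ((i + k) choose (2*k))
      = real (i + k) * real ((i + j) choose Suc (2*j))"
    by (simp only: of_nat_mult [symmetric])
  moreover have "real (i + k) \<noteq> 0" using k by simp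
  ultimately show ?thesis by (simp add: k field_simps del: binomial_Suc_Suc)
qed

fun wz_certificate :: "nat \<Rightarrow> nat \<Rightarrow> nat \<Rightarrow> nat" where
  "wz_certificate a i 0 = 0"
| "wz_certificate a i (Suc k) =
     (if a \<le> k then 0 else ((i + k) choose (2*k)) * ((3*a + i) choose (a - Suc k)))"

(* Y, U1, U2, U3, U4 stand for the binomials C(i+K-1, 2K-2), C(i+K-1, 2K-1), C(i+K, 2K-1),
   C(i+K, 2K), C(i+K+1, 2K), and Z, Z1 for C(3A+i, A-K), C(3A+i, A-K-1); the hypotheses are
   the contiguous relations between them. *)
lemma wz_step_rational_identity:
  fixes A I K Y Z Z1 U1 U2 U3 U4 :: real
  assumes "K \<ge> 1" "A \<ge> K" "I \<ge> 0"
    and "(2*K-1)*U1 = (I-K+1)*Y" "(2*K-1)*U2 = (I+K)*Y"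
    and "(2*K)*U3 = (I-K+1)*U2" "(2*K)*U4 = (I+K+1)*U2"
    and "(A-K)*Z = (2*A+I+K+1)*Z1"
  shows "(A+I+1)*(U4+U2)*(Z+Z1) - (3*A+I+1)*(U3+U1)*Z = (3*A+I+1)*(Y*Z - U3*Z1)"
proof -
  have nz: "2*K-1 \<noteq> 0" "2*K \<noteq> 0" "2*A+I+K+1 \<noteq> 0" using assms(1-3) by auto
  have U: "U1 = (I-K+1)*Y/(2*K-1)" "U3 = (I-K+1)*U2/(2*K)" "U4 = (I+K+1)*U2/(2*K)"
    and Z1: "Z1 = (A-K)*Z/(2*A+I+K+1)"
    and U2: "U2 = (I+K)*Y/(2*K-1)"
    using assms(4-) nz by (simp_all add: field_simps)
  show ?thesis
    unfolding U Z1 unfolding U2 using nz by (simp add: divide_simps) (simp add: algebra_simps)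
qed

lemma wz_step_Suc:
  assumes "Suc k \<le> a"
  shows "real (a+i+1) * real (binom_weight (Suc i) (Suc k)) * real (Suc (3*a+i) choose (a - Suc k))
       - real (3*a+i+1) * real (binom_weight i (Suc k)) * real ((3*a+i) choose (a - Suc k))
     = real (3*a+i+1) *
         (real (wz_certificate a i (Suc k)) - real (wz_certificate a i (Suc (Suc k))))"
proof -
  define N m where "N = 3*a+i" and "m = a - Suc k"
  define Y U1 U2 U3 U4 where "Y = real ((i+k) choose (2*k))"
    and "U1 = real ((i+k) choose Suc (2*k))" and "U2 = real (Suc (i+k) choose Suc (2*k))"
    and "U3 = real (Suc (i+k) choose Suc (Suc (2*k)))"
    and "U4 = real (Suc (Suc (i+k)) choose Suc (Suc (2*k)))"
  define Z Z1 where "Z = real (N choose m)" and "Z1 = (if m = 0 then 0 else real (N choose (m-1)))"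
  have "(2*real (Suc k)-1)*U1 = (real i - real (Suc k)+1)*Y"
    using of_nat_Suc_times_binomial_Suc[of "2*k" "i+k"] by (simp add: U1_def Y_def)
  moreover have "(2*real (Suc k)-1)*U2 = (real i + real (Suc k))*Y"
    using Suc_times_binomial[of "2*k" "i+k", THEN arg_cong[of _ _ real]]
    by (simp add: U2_def Y_def algebra_simps del: binomial_Suc_Suc)
  moreover have "(2*real (Suc k))*U3 = (real i - real (Suc k)+1)*U2"
    using of_nat_Suc_times_binomial_Suc[of "Suc (2*k)" "Suc (i+k)"]
    by (simp add: U3_def U2_def del: binomial_Suc_Suc)
  moreover have "(2*real (Suc k))*U4 = (real i + real (Suc k)+1)*U2"
    using Suc_times_binomial[of "Suc (2*k)" "Suc (i+k)", THEN arg_cong[of _ _ real]]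
    by (simp add: U4_def U2_def algebra_simps del: binomial_Suc_Suc)
  moreover have "(real a - real (Suc k))*Z = (2*real a + real i + real (Suc k) + 1)*Z1"
    using of_nat_times_binomial_pred[of m N] assms by (simp add: Z_def Z1_def m_def N_def)
  ultimately have key: "(real a+real i+1)*(U4+U2)*(Z+Z1) - (3*real a+real i+1)*(U3+U1)*Z
        = (3*real a+real i+1)*(Y*Z - U3*Z1)"
    using assms
    by (intro wz_step_rational_identity[where K = "real (Suc k)" and A = "real a" and I = "real i"])
      auto
  have pascal: "real (Suc N choose m) = Z + Z1"
    by (simp add: binomial_Suc_left Z_def Z1_def)
  have weights: "real (binom_weight (Suc i) (Suc k)) = U4 + U2"
    "real (binom_weight i (Suc k)) = U3 + U1"
    by (simp_all add: U1_def U2_def U3_def U4_def del: binomial_Suc_Suc)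
  have certificates: "real (wz_certificate a i (Suc k)) = Y * Z"
    "real (wz_certificate a i (Suc (Suc k))) = U3 * Z1"
    using assms
    by (auto simp: Y_def Z_def U3_def Z1_def N_def m_def Suc_diff_Suc simp del: binomial_Suc_Suc)
  show ?thesis
    unfolding N_def[symmetric] m_def[symmetric] Z_def[symmetric] pascal weights certificates
    using key by (simp add: N_def algebra_simps)
qed

lemma wz_step:
  assumes "1 \<le> a" and "k \<le> a"
  shows "real (a+i+1) * real (binom_weight (Suc i) k) * real (Suc (3*a+i) choose (a - k))
       - real (3*a+i+1) * real (binom_weight i k) * real ((3*a+i) choose (a - k))
     = real (3*a+i+1) * (real (wz_certificate a i k) - real (wz_certificate a i (Suc k)))"
proof (cases k)
  case 0
  have "real a * real ((3*a+i) choose a) = real (2*a+i+1) * real ((3*a+i) choose (a-1))"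
    using of_nat_times_binomial_pred[of a "3*a+i"] assms(1) by simp
  then show ?thesis
    using assms(1) by (simp add: 0 binomial_Suc_left algebra_simps)
next
  case (Suc j)
  then show ?thesis using wz_step_Suc assms(2) by simp
qed

lemma binom_weight_sum_recurrence:
  assumes "1 \<le> a"
  shows "real (a+i+1) * (\<Sum>k\<le>a. real (binom_weight (Suc i) k * (Suc (3*a+i) choose (a-k))))
       = real (3*a+i+1) * (\<Sum>k\<le>a. real (binom_weight i k * ((3*a+i) choose (a-k))))"
proof -
  have "real (a+i+1) * (\<Sum>k\<le>a. real (binom_weight (Suc i) k * (Suc (3*a+i) choose (a-k))))
      - real (3*a+i+1) * (\<Sum>k\<le>a. real (binom_weight i k * ((3*a+i) choose (a-k))))
      = real (3*a+i+1) *
          (\<Sum>k\<le>a. real (wz_certificate a i k) - real (wz_certificate a i (Suc k)))"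
    using wz_step[OF assms]
    by (simp add: sum_distrib_left sum_subtractf[symmetric] mult.assoc right_diff_distrib)
  also have "\<dots> = 0"
    by (subst sum_telescope) simp
  finally show ?thesis by simp
qed

lemma binom_weight_sum:
  assumes "1 \<le> a"
  shows "(\<Sum>k\<le>a. binom_weight i k * ((3*a+i) choose (a-k))) = (3*a+i) choose (2*a)"
proof (induction i)
  case 0
  have "binom_weight 0 (Suc k) = 0" for k
    by (simp add: binomial_eq_0 del: binomial_Suc_Suc)
  then have "(\<Sum>k\<le>a. binom_weight 0 k * ((3*a) choose (a-k))) = (3*a) choose a"
    by (simp add: sum.atMost_shift del: binom_weight.simps(2))
  also have "\<dots> = (3*a) choose (2*a)"
    using binomial_symmetric[of a "3*a"] by simp
  finally show ?case by simp
next
  case (Suc i)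
  have "(a+i+1) * (Suc (3*a+i) choose (2*a)) = (3*a+i+1) * ((3*a+i) choose (2*a))"
    using binomial_absorb_comp[of "Suc (3*a+i)" "2*a"] by (simp add: Suc_diff_le)
  then have "real (a+i+1) * real (Suc (3*a+i) choose (2*a))
      = real (3*a+i+1) * (\<Sum>k\<le>a. real (binom_weight i k * ((3*a+i) choose (a-k))))"
    unfolding Suc.IH [symmetric] of_nat_sum [symmetric] of_nat_mult [symmetric] by (rule arg_cong)
  also have "\<dots> =
      real (a+i+1) * (\<Sum>k\<le>a. real (binom_weight (Suc i) k * (Suc (3*a+i) choose (a-k))))"
    by (rule binom_weight_sum_recurrence [OF assms, symmetric])
  finally have "real (\<Sum>k\<le>a. binom_weight (Suc i) k * (Suc (3*a+i) choose (a-k)))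
      = real (Suc (3*a+i) choose (2*a))"
    by simp
  then show ?case
    by (simp only: of_nat_eq_iff add_Suc_right)
qed

theorem theorem2:
  fixes a i :: nat
  assumes "a \<ge> 1" and "i \<ge> 1"
  shows "real ((3*a+i) choose (a+i)) - real ((3*a+2*i) choose a) =
    (\<Sum>k=1..a. ((real (i+3*k) / real (i+k)) * real ((i+k) choose (2*k))
                   - real (i choose k)) * real ((3*a+i) choose (a-k)))"
proof -
  define f where
    "f k = (real (binom_weight i k) - real (i choose k)) * real ((3*a+i) choose (a-k))" for k
  have "(\<Sum>k=1..a. ((real (i+3*k) / real (i+k)) * real ((i+k) choose (2*k))
                   - real (i choose k)) * real ((3*a+i) choose (a-k))) = (\<Sum>k=1..a. f k)"
    by (rule sum.cong) (simp_all add: f_def binom_weight_eq_ratio)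
  also have "\<dots> = (\<Sum>k\<le>a. f k)"
    by (simp add: f_def atMost_atLeast0 sum.atLeast_Suc_atMost)
  also have "\<dots> = real ((3*a+i) choose (2*a)) - real ((3*a+2*i) choose a)"
  proof -
    have "(\<Sum>k\<le>a. real (binom_weight i k) * real ((3*a+i) choose (a-k)))
        = real ((3*a+i) choose (2*a))"
      using binom_weight_sum [OF assms(1), of i, THEN arg_cong [of _ _ real]]
      by (simp only: of_nat_sum of_nat_mult)
    moreover have "(\<Sum>k\<le>a. real (i choose k) * real ((3*a+i) choose (a-k)))
        = real ((3*a+2*i) choose a)"
      using vandermonde [of i "3*a+i" a, THEN arg_cong [of _ _ real]]
      by (simp only: of_nat_sum of_nat_mult add.left_commute mult_2 add.assoc)
    ultimately show ?thesis
      by (simp add: f_def left_diff_distrib sum_subtractf)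
  qed
  also have "(3*a+i) choose (2*a) = (3*a+i) choose (a+i)"
    using binomial_symmetric[of "a+i" "3*a+i"] by simp
  finally show ?thesis ..
qed

end
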